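(* Let $\bar x$ be a sparsest solution of problem (P), and let $\tilde X$ be an optimal solution of the QBP program for some $\lambda\ge0$. Suppose that: - $\operatorname{rank}(\tilde X)=1$; - $\|\tilde X\|_0<\tfrac12\left(1+\tfrac{1}{\mu(\mathbf{B})}\right)$, with the convention $1/0=\infty$. Then $\tilde X=\begin{bmatrix}1\\ \bar x\end{bmatrix}\begin{bmatrix}1 & \bar x^H\end{bmatrix}$.
   Context: Fix integers $n,N\ge 1$ and data $a_i\in\mathbb{C}$, $b_i,c_i\in\mathbb{C}^n$, $Q_i\in\mathbb{C}^{n\times n}$, $y_i\in\mathbb{C}$ for $i=1,\dots,N$. Problem (P) is $$\min_{x\in\mathbb{C}^n}\|x\|_0\quad\text{subject to}\quad y_i=a_i+b_i^H x+x^H c_i+x^H Q_i x,\quad i=1,\dots,N.$$ Here $\|\cdot\|_0$ counts nonzero entries of a vector or matrix, and ${}^H$ denotes conjugate transpose. Let $\Phi_i=\begin{bmatrix} a_i & b_i^H\\ c_i & Q_i\end{bmatrix}\in\mathbb{C}^{(n+1)\times(n+1)}$. Define the linear operator $B:\mathbb{C}^{(n+1)\times(n+1)}\to\mathbb{C}^N$ by $B(X)=(\operatorname{tr}(\Phi_i X))_{i=1}^N$. The QBP program with parameter $\lambda\ge0$ is $$\min_{X}\ \operatorname{tr}(X)+\lambda\|X\|_1\quad\text{subject to}\quad y_i=\operatorname{tr}(\Phi_i X)\ (i=1,\dots,N),\quad X_{1,1}=1,\quad X\succeq0,$$ where $X$ ranges over Hermitian $(n+1)\times(n+1)$ matrices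 and $\|X\|_1$ is the sum of absolute values of the entries. Let $\mathbf{B}\in\mathbb{C}^{N\times(n+1)^2}$ be the matrix satisfying $B(X)=\mathbf{B}\,\mathrm{vec}(X)$ for all $X$, where $\mathrm{vec}(X)$ is the vectorization of $X$ (stacking its entries into a vector). Assume every column of $\mathbf{B}$ is nonzero. For a matrix $A$ with nonzero columns $A_{:,1},\dots,A_{:,m}$, the mutual coherence is $\mu(A)=\max_{i\ne j}\frac{|A_{:,i}^H A_{:,j}|}{\|A_{:,i}\|\,\|A_{:,j}\|}$, with Euclidean norms. *)

theory Defs
  imports "HOL-Analysis.Analysis"
begin

text \<open>Indices of (n+1)-dimensional objects are the type unit + 'n:
  Inl () is the leading index 1, Inr j are the indices of x.\<close>

definition l0vec :: "complex^'n \<Rightarrow> nat" where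
  "l0vec x = card {j. x $ j \<noteq> 0}"

definition l0mat :: "complex^'m^'m \<Rightarrow> nat" where
  "l0mat X = card {(p, q). X $ p $ q \<noteq> 0}"

definition l1mat :: "complex^'m^'m \<Rightarrow> real" where
  "l1mat X = (\<Sum>p\<in>UNIV. \<Sum>q\<in>UNIV. cmod (X $ p $ q))"

definition mtrace :: "complex^'m^'m \<Rightarrow> complex" where
  "mtrace X = (\<Sum>p\<in>UNIV. X $ p $ p)"

definition hermitian :: "complex^'m^'m \<Rightarrow> bool" where
  "hermitian X \<longleftrightarrow> (\<forall>p q. X $ q $ p = cnj (X $ p $ q))"

definition psd :: "complex^'m^'m \<Rightarrow> bool" where
  "psd X \<longleftrightarrow> hermitian X \<and>
     (\<forall>v::complex^'m. (\<Sum>p\<in>UNIV. \<Sum>q\<in>UNIV. cnj (v $ p) * X $ p $ q * v $ q) \<in> \<real> \<and>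
        Re (\<Sum>p\<in>UNIV. \<Sum>q\<in>UNIV. cnj (v $ p) * X $ p $ q * v $ q) \<ge> 0)"

definition qmeas :: "complex \<Rightarrow> complex^'n \<Rightarrow> complex^'n \<Rightarrow> complex^'n^'n \<Rightarrow> complex^'n \<Rightarrow> complex" where
  "qmeas a b c Q x = a + (\<Sum>j\<in>UNIV. cnj (b $ j) * x $ j) + (\<Sum>j\<in>UNIV. cnj (x $ j) * c $ j)
     + (\<Sum>j\<in>UNIV. \<Sum>k\<in>UNIV. cnj (x $ j) * Q $ j $ k * x $ k)"

definition Phi :: "complex \<Rightarrow> complex^'n \<Rightarrow> complex^'n \<Rightarrow> complex^'n^'n \<Rightarrow> complex^(unit + 'n)^(unit + 'n)" where
  "Phi a b c Q = (\<chi> p q. case p of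
       Inl _ \<Rightarrow> (case q of Inl _ \<Rightarrow> a | Inr k \<Rightarrow> cnj (b $ k))
     | Inr j \<Rightarrow> (case q of Inl _ \<Rightarrow> c $ j | Inr k \<Rightarrow> Q $ j $ k))"

text \<open>Matrix B with B(X) = B vec(X): row i, column (p,q) holds the coefficient of X_{pq}
  in tr(Phi_i X), namely (Phi_i)_{qp}.\<close>
definition Bmat :: "('k \<Rightarrow> complex) \<Rightarrow> ('k \<Rightarrow> complex^'n) \<Rightarrow> ('k \<Rightarrow> complex^'n) \<Rightarrow> ('k \<Rightarrow> complex^'n^'n)
    \<Rightarrow> complex^((unit + 'n) \<times> (unit + 'n))^'k" where
  "Bmat a b c Q = (\<chi> i pq. Phi (a i) (b i) (c i) (Q i) $ snd pq $ fst pq)"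

definition cinner :: "complex^'r \<Rightarrow> complex^'r \<Rightarrow> complex" where
  "cinner u v = (\<Sum>i\<in>UNIV. cnj (u $ i) * v $ i)"

definition coherence :: "complex^'c^'r \<Rightarrow> real" where
  "coherence A = Max {cmod (cinner (column i A) (column j A)) / (norm (column i A) * norm (column j A))
                      | i j. i \<noteq> j}"

definition lift :: "complex^'n \<Rightarrow> complex^(unit + 'n)" where
  "lift x = (\<chi> p. case p of Inl _ \<Rightarrow> 1 | Inr j \<Rightarrow> x $ j)"

definition outer :: "complex^'m \<Rightarrow> complex^'m^'m" where
  "outer v = (\<chi> p q. v $ p * cnj (v $ q))"

definition feasible_P :: "('k \<Rightarrow> complex) \<Rightarrow> ('k \<Rightarrow> complex^'n) \<Rightarrow> ('k \<Rightarrow> complex^'n) \<Rightarrow> ('k \<Rightarrow> complex^'n^'n)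
    \<Rightarrow> ('k \<Rightarrow> complex) \<Rightarrow> complex^'n \<Rightarrow> bool" where
  "feasible_P a b c Q y x \<longleftrightarrow> (\<forall>i. y i = qmeas (a i) (b i) (c i) (Q i) x)"

definition sparsest_P where
  "sparsest_P a b c Q y x \<longleftrightarrow> feasible_P a b c Q y x \<and>
     (\<forall>x'. feasible_P a b c Q y x' \<longrightarrow> l0vec x \<le> l0vec x')"

definition feasible_QBP :: "('k \<Rightarrow> complex) \<Rightarrow> ('k \<Rightarrow> complex^'n) \<Rightarrow> ('k \<Rightarrow> complex^'n) \<Rightarrow> ('k \<Rightarrow> complex^'n^'n)
    \<Rightarrow> ('k \<Rightarrow> complex) \<Rightarrow> complex^(unit + 'n)^(unit + 'n) \<Rightarrow> bool" where
  "feasible_QBP a b c Q y X \<longleftrightarrow>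
     (\<forall>i. y i = mtrace (Phi (a i) (b i) (c i) (Q i) ** X)) \<and> X $ Inl () $ Inl () = 1 \<and> psd X"

text \<open>tr(X) is real for Hermitian X; the objective uses its real part.\<close>
definition qbp_obj :: "real \<Rightarrow> complex^'m^'m \<Rightarrow> real" where
  "qbp_obj lam X = Re (mtrace X) + lam * l1mat X"

definition optimal_QBP where
  "optimal_QBP lam a b c Q y X \<longleftrightarrow> feasible_QBP a b c Q y X \<and>
     (\<forall>X'. feasible_QBP a b c Q y X' \<longrightarrow> qbp_obj lam X \<le> qbp_obj lam X')"

end

theory Submission
  imports Defs
begin

text \<open>A feasible rank-one X is a lifted outer product of a feasible point x of (P); since
  the sparsest solution xbar has at most as many nonzeros, its lifted outer product has at most
  as many nonzero entries as X. Both matrices satisfy the linear constraints, so vec of their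
  difference is a kernel vector of B with at most 2 ||X||_0 < 1 + 1/mu(B) nonzeros. But the
  standard coherence argument shows that every nonzero kernel vector of a matrix with nonzero
  columns has at least 1 + 1/mu nonzeros.\<close>

lemma sum_UNIV_unit_plus:
  fixes f :: "unit + 'n::finite \<Rightarrow> 'a::comm_monoid_add"
  shows "(\<Sum>p\<in>UNIV. f p) = f (Inl ()) + (\<Sum>j\<in>UNIV. f (Inr j))"
proof -
  have "(\<Sum>p\<in>UNIV. f p) = (\<Sum>p\<in>UNIV <+> UNIV. f p)" by simp
  also have "\<dots> = (\<Sum>u\<in>UNIV. f (Inl u)) + (\<Sum>j\<in>UNIV. f (Inr j))"
    by (subst sum.Plus) (auto simp: o_def)
  finally show ?thesis by (simp add: UNIV_unit)
qed

lemma mtrace_Phi_outer_lift: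
  "mtrace (Phi a b c Q ** outer (lift x)) = qmeas a b c Q x"
  unfolding mtrace_def matrix_matrix_mult_def qmeas_def
  by (simp add: sum_UNIV_unit_plus Phi_def outer_def lift_def sum.distrib algebra_simps)

lemma l0vec_lift: "l0vec (lift x) = Suc (l0vec x)"
proof -
  have "{p. lift x $ p \<noteq> 0} = insert (Inl ()) (Inr ` {j. x $ j \<noteq> 0})"
  proof (rule set_eqI)
    show "p \<in> {p. lift x $ p \<noteq> 0} \<longleftrightarrow> p \<in> insert (Inl ()) (Inr ` {j. x $ j \<noteq> 0})" for p
      by (cases p) (auto simp: lift_def)
  qed
  then show ?thesis
    unfolding l0vec_def by (simp add: card_image inj_on_def image_iff)
qed

lemma l0mat_outer: "l0mat (outer v) = l0vec v * l0vec v"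
proof -
  have "{(p, q). outer v $ p $ q \<noteq> 0} = {p. v $ p \<noteq> 0} \<times> {p. v $ p \<noteq> 0}"
    by (auto simp: outer_def)
  then show ?thesis
    unfolding l0mat_def l0vec_def by (simp add: card_cartesian_product)
qed

definition vectorize :: "'a^'n^'m \<Rightarrow> 'a^('m \<times> 'n)" where
  "vectorize M = (\<chi> pq. M $ fst pq $ snd pq)"

lemma vectorize_diff: "vectorize (M - N) = vectorize M - vectorize N"
  by (simp add: vectorize_def vec_eq_iff)

lemma vectorize_eq_0_iff: "vectorize M = 0 \<longleftrightarrow> M = 0"
  by (auto simp: vectorize_def vec_eq_iff)

lemma l0vec_vectorize: "l0vec (vectorize M) = l0mat M"
  by (simp add: l0vec_def l0mat_def vectorize_def case_prod_beta')

lemma l0vec_diff_le: "l0vec (u - v) \<le> l0vec u + l0vec v"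
proof -
  have "card {j. (u - v) $ j \<noteq> 0} \<le> card ({j. u $ j \<noteq> 0} \<union> {j. v $ j \<noteq> 0})"
    by (rule card_mono) auto
  also have "\<dots> \<le> card {j. u $ j \<noteq> 0} + card {j. v $ j \<noteq> 0}"
    by (rule card_Un_le)
  finally show ?thesis by (simp add: l0vec_def)
qed

lemma Bmat_mult_vectorize:
  "Bmat a b c Q *v vectorize M = (\<chi> i. mtrace (Phi (a i) (b i) (c i) (Q i) ** M))"
proof -
  have "(Bmat a b c Q *v vectorize M) $ i = mtrace (Phi (a i) (b i) (c i) (Q i) ** M)" for i
  proof -
    have "(Bmat a b c Q *v vectorize M) $ i
        = (\<Sum>p\<in>UNIV. \<Sum>q\<in>UNIV. Phi (a i) (b i) (c i) (Q i) $ q $ p * M $ p $ q)"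
      unfolding matrix_vector_mult_def Bmat_def vectorize_def vec_lambda_beta
        UNIV_Times_UNIV[symmetric] sum.cartesian_product
      by (simp add: case_prod_beta)
    also have "\<dots> = mtrace (Phi (a i) (b i) (c i) (Q i) ** M)"
      unfolding mtrace_def matrix_matrix_mult_def vec_lambda_beta by (rule sum.swap)
    finally show ?thesis .
  qed
  then show ?thesis
    by (simp add: vec_eq_iff)
qed

lemma norm_power2_cinner_self:
  "complex_of_real ((norm (u :: complex^'r::finite))\<^sup>2) = cinner u u"
proof -
  have "(norm u)\<^sup>2 = (\<Sum>i\<in>UNIV. (cmod (u $ i))\<^sup>2)"
    by (simp add: norm_vec_def L2_set_def sum_nonneg)
  then have "complex_of_real ((norm u)\<^sup>2) = (\<Sum>i\<in>UNIV. complex_of_real ((cmod (u $ i))\<^sup>2))"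
    by (simp only: of_real_sum)
  also have "\<dots> = cinner u u"
    unfolding cinner_def by (rule sum.cong) (simp_all only: complex_norm_square mult.commute)
  finally show ?thesis .
qed

lemma coherence_ge:
  fixes A :: "complex^'c::finite^'r::finite"
  assumes "i \<noteq> j"
  shows "cmod (cinner (column i A) (column j A)) / (norm (column i A) * norm (column j A))
           \<le> coherence A"
proof -
  let ?coh = "\<lambda>i j. cmod (cinner (column i A) (column j A)) / (norm (column i A) * norm (column j A))"
  have "finite {?coh i j | i j. i \<noteq> j}"
    by (rule finite_subset[of _ "case_prod ?coh ` UNIV"]) auto
  then show ?thesis
    unfolding coherence_def by (rule Max_ge) (use assms in blast)
qed

text \<open>Taking the inner product of A z = 0 with the i-th column isolates the i-th term.\<close>

lemma kernel_weight_le_coherence: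
  fixes A :: "complex^'c::finite^'r::finite"
  assumes cols: "\<forall>c. column c A \<noteq> 0" and kernel: "A *v z = 0"
  defines "w \<equiv> \<lambda>c. cmod (z $ c) * norm (column c A)"
  shows "w i \<le> coherence A * (\<Sum>c\<in>UNIV - {i}. w c)"
proof -
  let ?g = "\<lambda>c. cinner (column i A) (column c A)"
  have "(\<Sum>c\<in>UNIV. ?g c * z $ c) = (\<Sum>c\<in>UNIV. \<Sum>r\<in>UNIV. cnj (A $ r $ i) * (A $ r $ c * z $ c))"
    by (simp add: cinner_def column_def sum_distrib_right mult.assoc)
  also have "\<dots> = (\<Sum>r\<in>UNIV. cnj (A $ r $ i) * (\<Sum>c\<in>UNIV. A $ r $ c * z $ c))"
    by (subst sum.swap) (simp add: sum_distrib_left)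
  also have "\<dots> = 0"
    using kernel by (simp add: vec_eq_iff matrix_vector_mult_def)
  finally have isolated: "?g i * z $ i = - (\<Sum>c\<in>UNIV - {i}. ?g c * z $ c)"
    by (simp add: sum.remove eq_neg_iff_add_eq_0)
  have "norm (column i A) * w i = (norm (column i A))\<^sup>2 * cmod (z $ i)"
    by (simp add: w_def power2_eq_square)
  also have "\<dots> = cmod (?g i * z $ i)"
    by (simp only: norm_power2_cinner_self[symmetric] norm_mult norm_of_real abs_power2)
  also have "\<dots> = cmod (\<Sum>c\<in>UNIV - {i}. ?g c * z $ c)"
    by (simp only: isolated norm_minus_cancel)
  also have "\<dots> \<le> (\<Sum>c\<in>UNIV - {i}. cmod (?g c) * cmod (z $ c))"
    by (rule order_trans[OF norm_sum]) (simp add: norm_mult)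
  also have "\<dots> \<le> (\<Sum>c\<in>UNIV - {i}. coherence A * norm (column i A) * w c)"
  proof (rule sum_mono)
    fix c assume "c \<in> UNIV - {i}"
    then have "cmod (?g c) / (norm (column i A) * norm (column c A)) \<le> coherence A"
      by (intro coherence_ge) auto
    then have "cmod (?g c) \<le> coherence A * (norm (column i A) * norm (column c A))"
      using cols by (simp add: divide_le_eq)
    then have "cmod (?g c) * cmod (z $ c)
        \<le> coherence A * (norm (column i A) * norm (column c A)) * cmod (z $ c)"
      by (rule mult_right_mono) simp
    then show "cmod (?g c) * cmod (z $ c) \<le> coherence A * norm (column i A) * w c"
      by (simp add: w_def mult_ac)
  qed
  also have "\<dots> = norm (column i A) * (coherence A * (\<Sum>c\<in>UNIV - {i}. w c))"
    by (simp add: sum_distrib_left mult_ac)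
  finally show ?thesis
    using cols by simp
qed

text \<open>Apply the previous lemma at an index of maximal weight |z_c| ||A_c||.\<close>

lemma kernel_l0vec_ge_coherence:
  fixes A :: "complex^'c::finite^'r::finite"
  assumes cols: "\<forall>c. column c A \<noteq> 0" and kernel: "A *v z = 0" and "z \<noteq> 0"
  shows "0 < coherence A \<and> 1 + 1 / coherence A \<le> real (l0vec z)"
proof -
  define w where "w c = cmod (z $ c) * norm (column c A)" for c
  define S where "S = {c. z $ c \<noteq> 0}"
  obtain i where i: "w i = Max (range w)"
    by (metis (mono_tags, lifting) Max_in finite UNIV_not_empty empty_is_image finite_imageI imageE)
  have w_le: "w c \<le> w i" for c
    unfolding i by (rule Max_ge) auto
  have w_pos_iff: "w c > 0 \<longleftrightarrow> c \<in> S" for c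
    using cols[rule_format, of c] by (simp add: w_def S_def zero_less_mult_iff)
  obtain j where "z $ j \<noteq> 0"
    using \<open>z \<noteq> 0\<close> by (metis vec_eq_iff zero_index)
  then have "w i > 0"
    using w_le[of j] w_pos_iff[of j] by (simp add: S_def)
  then have "i \<in> S"
    using w_pos_iff by blast
  have "(\<Sum>c\<in>UNIV - {i}. w c) = (\<Sum>c\<in>S - {i}. w c)"
    by (rule sum.mono_neutral_right) (auto simp: S_def w_def)
  also have "\<dots> \<le> (real (card S) - 1) * w i"
  proof -
    have "card S \<ge> 1"
      using \<open>i \<in> S\<close> by (metis One_nat_def Suc_leI card_gt_0_iff empty_iff finite)
    then show ?thesis
      using sum_bounded_above[of "S - {i}" w "w i"] w_le \<open>i \<in> S\<close> by (simp add: of_nat_diff)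
  qed
  finally have sum_le: "(\<Sum>c\<in>UNIV - {i}. w c) \<le> (real (card S) - 1) * w i" .
  have w_i_le: "w i \<le> coherence A * (\<Sum>c\<in>UNIV - {i}. w c)"
    unfolding w_def using kernel_weight_le_coherence[OF cols kernel] .
  then have pos: "coherence A > 0"
    using \<open>w i > 0\<close> sum_nonneg[of "UNIV - {i}" w] mult_nonpos_nonneg[of "coherence A"]
    unfolding w_def by (smt (verit) mult_nonneg_nonneg norm_ge_zero)
  have "w i \<le> coherence A * ((real (card S) - 1) * w i)"
    using w_i_le mult_left_mono[OF sum_le less_imp_le[OF pos]] by linarith
  then have "1 \<le> coherence A * (real (card S) - 1)"
    using \<open>w i > 0\<close> by (simp add: mult.assoc[symmetric])
  then have "1 / coherence A \<le> real (card S) - 1"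
    using pos by (simp add: divide_le_eq mult.commute)
  with pos show ?thesis
    by (simp add: l0vec_def S_def)
qed

lemma rank_one_entries_factor:
  fixes X :: "'a::field^'n::finite^'m::finite"
  assumes "rank X = 1"
  obtains c u where "\<And>p q. X $ p $ q = c p * u $ q"
proof -
  obtain B where B: "B \<subseteq> rows X" "rows X \<subseteq> vec.span B" "card B = vec.dim (rows X)"
    by (meson vec.basis_exists)
  with assms obtain u where "B = {u}"
    by (metis card_1_singletonE row_rank_def_gen)
  have "\<exists>k. row p X = k *s u" for p
  proof -
    have "row p X \<in> vec.span {u}"
      using B(2) \<open>B = {u}\<close> by (auto simp: rows_def)
    then show ?thesis
      by (auto simp: vec.span_singleton)
  qed
  then obtain c where c: "\<And>p. row p X = c p *s u"
    by metis
  have "X $ p $ q = c p * u $ q" for p q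
    using arg_cong[OF c[of p], of "\<lambda>v. v $ q"] by (simp add: row_def)
  then show ?thesis
    using that by blast
qed

lemma rank_one_hermitian_eq_outer_column:
  fixes X :: "complex^'m::finite^'m"
  assumes "rank X = 1" and "hermitian X" and "X $ r $ r = 1"
  shows "X = outer (column r X)"
proof -
  obtain c u where cu: "\<And>p q. X $ p $ q = c p * u $ q"
    using rank_one_entries_factor[OF assms(1)] by blast
  have factor: "X $ p $ q = X $ p $ r * cnj (X $ q $ r)" for p q
  proof -
    have "X $ p $ q = X $ p $ q * X $ r $ r"
      using assms(3) by simp
    also have "\<dots> = X $ p $ r * X $ r $ q"
      by (simp add: cu mult_ac)
    also have "X $ r $ q = cnj (X $ q $ r)"
      using assms(2) unfolding hermitian_def by blast
    finally show ?thesis .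
  qed
  show ?thesis
    unfolding vec_eq_iff outer_def column_def vec_lambda_beta using factor by blast
qed

lemma feasible_QBP_rank_one:
  assumes "feasible_QBP a b c Q y X" and "rank X = 1"
  shows "\<exists>x. X = outer (lift x) \<and> feasible_P a b c Q y x"
proof -
  define x where "x = (\<chi> j. X $ Inr j $ Inl ())"
  from assms(1) have X11: "X $ Inl () $ Inl () = 1" and "hermitian X"
    by (auto simp: feasible_QBP_def psd_def)
  have "column (Inl ()) X = lift x"
  proof -
    have "column (Inl ()) X $ p = lift x $ p" for p
      using X11 by (cases p) (simp_all add: column_def lift_def x_def)
    then show ?thesis
      by (simp add: vec_eq_iff)
  qed
  then have X: "X = outer (lift x)"
    using rank_one_hermitian_eq_outer_column[OF assms(2) \<open>hermitian X\<close> X11] by simp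
  have "feasible_P a b c Q y x"
    using assms(1) unfolding feasible_P_def feasible_QBP_def X by (simp add: mtrace_Phi_outer_lift)
  with X show ?thesis
    by blast
qed

theorem mainTheorem5:
  fixes a :: "'k::finite \<Rightarrow> complex" and b c :: "'k \<Rightarrow> complex^'n"
    and Q :: "'k \<Rightarrow> complex^'n^'n" and y :: "'k \<Rightarrow> complex"
    and lam :: real and xbar :: "complex^'n" and Xt :: "complex^(unit + 'n)^(unit + 'n)"
  assumes cols: "\<forall>pq. column pq (Bmat a b c Q) \<noteq> 0"
    and lam: "lam \<ge> 0"
    and sp: "sparsest_P a b c Q y xbar"
    and opt: "optimal_QBP lam a b c Q y Xt"
    and rk: "rank Xt = 1"
    and small: "coherence (Bmat a b c Q) = 0 \<or>
                real (l0mat Xt) < (1 + 1 / coherence (Bmat a b c Q)) / 2"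
  shows "Xt = outer (lift xbar)"
proof (rule ccontr)
  let ?B = "Bmat a b c Q" and ?Xbar = "outer (lift xbar)"
  assume "Xt \<noteq> ?Xbar"
  from opt have feas: "feasible_QBP a b c Q y Xt"
    by (simp add: optimal_QBP_def)
  then obtain xt where Xt: "Xt = outer (lift xt)" and "feasible_P a b c Q y xt"
    using feasible_QBP_rank_one[OF _ rk] by blast
  with sp have "l0vec xbar \<le> l0vec xt"
    by (simp add: sparsest_P_def)
  then have sparser: "l0mat ?Xbar \<le> l0mat Xt"
    unfolding Xt l0mat_outer l0vec_lift by (intro mult_le_mono) simp_all
  define z where "z = vectorize (Xt - ?Xbar)"
  have "mtrace (Phi (a i) (b i) (c i) (Q i) ** Xt) = y i" for i
    using feas by (simp add: feasible_QBP_def)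
  moreover have "mtrace (Phi (a i) (b i) (c i) (Q i) ** ?Xbar) = y i" for i
    using sp by (simp add: sparsest_P_def feasible_P_def mtrace_Phi_outer_lift)
  ultimately have "?B *v vectorize Xt = ?B *v vectorize ?Xbar"
    by (simp add: Bmat_mult_vectorize)
  then have "?B *v z = 0"
    by (simp add: z_def vectorize_diff matrix_vector_mult_diff_distrib)
  moreover have "z \<noteq> 0"
    using \<open>Xt \<noteq> ?Xbar\<close> by (simp add: z_def vectorize_eq_0_iff)
  ultimately have "0 < coherence ?B" and "1 + 1 / coherence ?B \<le> real (l0vec z)"
    using kernel_l0vec_ge_coherence[OF cols] by blast+
  moreover have "l0vec z \<le> 2 * l0mat Xt"
    using l0vec_diff_le[of "vectorize Xt" "vectorize ?Xbar"] sparser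
    by (simp add: z_def vectorize_diff l0vec_vectorize)
  ultimately have "coherence ?B \<noteq> 0" and "1 + 1 / coherence ?B \<le> 2 * real (l0mat Xt)"
    by simp_all
  with small show False
    by simp
qed

end
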